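(* Let $k_1,k_2\in 2\mathbf{Z}_{\geq 0}$ be even positive integers, and let $G=(V,E)$ be an undirected graph with edge capacities $u_e\in\mathbf{Z}_{\geq 0}$, sources $s_1,s_2$ and sinks $t_1,t_2$. Assume $2c_{k_1,k_2}(G)=c_{k_1/2,k_2/2}(G)$. Then an optimal solution of the maximum $k_1,k_2$-splittable totally uniform flow problem on $G$ is obtained by the following construction applied with $\bar k_1=k_1/2$, $\bar k_2=k_2/2$: let $x=c_{\bar k_1,\bar k_2}(G)$, form the auxiliary graph on $V,E$ with capacities $u'_e=\lfloor u_e/x\rfloor$, compute a half-integral two-commodity flow in it with demands $d_1=\bar k_1$, $d_2=\bar k_2$ (which exists by Hu's two-commodity flow theorem), decompose it into $2\bar k_1=k_1$ paths for commodity 1 and $2\bar k_2=k_2$ paths for commodity 2 each carrying flow $1/2$, and assign each of these paths flow $x/2$ in $G$. The resulting $k_1,k_2$-splittable totally uniform flow, with flow $\tfrac12 c_{k_1/2,k_2/2}(G)$ per path, is maximum.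
   Context: A $k_1,k_2$-splittable flow is a two-commodity flow respecting edge capacities using $k_1$ $s_1$--$t_1$-paths for commodity 1 and $k_2$ $s_2$--$t_2$-paths for commodity 2 (paths may repeat); it is totally uniform if all paths of all commodities carry the same flow value. For $S\subseteq V$, $\mathrm{dem}(S)$ is $k_1$ if $S$ separates $s_1$ from $t_1$ only, $k_2$ if it separates $s_2$ from $t_2$ only, $k_1+k_2$ if it separates both pairs, and $0$ otherwise. $c_{k_1,k_2}(S)$ is the maximum $x\ge 0$ such that there exist integers $n(e)\ge 0$ for $e\in\delta(S)$ with $n(e)x\le u_e$ and $\sum_{e\in\delta(S)} n(e)\ge \mathrm{dem}(S)$, and $c_{k_1,k_2}(G)=\min\{c_{k_1,k_2}(S): S\subseteq V,\ \mathrm{dem}(S)\neq 0\}$. The per-path flow of any $k_1,k_2$-splittable totally uniform flow is at most $c_{k_1,k_2}(G)$, and always $2c_{k_1,k_2}(G)\ge c_{k_1/2,k_2/2}(G)$. *)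

theory Defs
  imports Complex_Main
begin

text \<open>An undirected (multi)graph: finite vertex set V, finite edge set E, and a map
  ends assigning to each edge its two endpoints (orientation irrelevant).\<close>

definition graph :: "'v set \<Rightarrow> 'e set \<Rightarrow> ('e \<Rightarrow> 'v \<times> 'v) \<Rightarrow> bool" where
  "graph V E ends \<longleftrightarrow> finite V \<and> finite E \<and>
     (\<forall>e\<in>E. fst (ends e) \<in> V \<and> snd (ends e) \<in> V)"

definition is_path :: "'v set \<Rightarrow> 'e set \<Rightarrow> ('e \<Rightarrow> 'v \<times> 'v) \<Rightarrow> 'v \<Rightarrow> 'v
    \<Rightarrow> 'v list \<times> 'e list \<Rightarrow> bool" where
  "is_path V E ends s t p \<longleftrightarrow>
     (let vs = fst p; es = snd p in
       vs \<noteq> [] \<and> hd vs = s \<and> last vs = t \<and> distinct vs \<and> set vs \<subseteq> V \<and>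
       length vs = length es + 1 \<and>
       (\<forall>i<length es. es ! i \<in> E \<and>
          (ends (es ! i) = (vs ! i, vs ! Suc i) \<or> ends (es ! i) = (vs ! Suc i, vs ! i))))"

definition load :: "('v list \<times> 'e list) list \<Rightarrow> 'e \<Rightarrow> nat" where
  "load Ps e = length (filter (\<lambda>p. e \<in> set (snd p)) Ps)"

definition path_families ::
  "'v set \<Rightarrow> 'e set \<Rightarrow> ('e \<Rightarrow> 'v \<times> 'v) \<Rightarrow> 'v \<Rightarrow> 'v \<Rightarrow> 'v \<Rightarrow> 'v \<Rightarrow> nat \<Rightarrow> nat
     \<Rightarrow> ('v list \<times> 'e list) list \<Rightarrow> ('v list \<times> 'e list) list \<Rightarrow> bool" where
  "path_families V E ends s1 t1 s2 t2 k1 k2 P1 P2 \<longleftrightarrow>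
     length P1 = k1 \<and> length P2 = k2 \<and>
     (\<forall>p\<in>set P1. is_path V E ends s1 t1 p) \<and> (\<forall>p\<in>set P2. is_path V E ends s2 t2 p)"

text \<open>Set of per-path flow values f of k1,k2-splittable totally uniform flows respecting
  the edge capacities u.\<close>

definition tu_values ::
  "'v set \<Rightarrow> 'e set \<Rightarrow> ('e \<Rightarrow> 'v \<times> 'v) \<Rightarrow> ('e \<Rightarrow> nat) \<Rightarrow> 'v \<Rightarrow> 'v \<Rightarrow> 'v \<Rightarrow> 'v
     \<Rightarrow> nat \<Rightarrow> nat \<Rightarrow> real set" where
  "tu_values V E ends u s1 t1 s2 t2 k1 k2 =
     {f. f \<ge> 0 \<and> (\<exists>P1 P2. path_families V E ends s1 t1 s2 t2 k1 k2 P1 P2 \<and>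
            (\<forall>e\<in>E. f * real (load (P1 @ P2) e) \<le> real (u e)))}"

definition cut_edges :: "'e set \<Rightarrow> ('e \<Rightarrow> 'v \<times> 'v) \<Rightarrow> 'v set \<Rightarrow> 'e set" where
  "cut_edges E ends S = {e\<in>E. (fst (ends e) \<in> S) \<noteq> (snd (ends e) \<in> S)}"

definition separates :: "'v set \<Rightarrow> 'v \<Rightarrow> 'v \<Rightarrow> bool" where
  "separates S s t \<longleftrightarrow> (s \<in> S) \<noteq> (t \<in> S)"

definition dem :: "'v \<Rightarrow> 'v \<Rightarrow> 'v \<Rightarrow> 'v \<Rightarrow> nat \<Rightarrow> nat \<Rightarrow> 'v set \<Rightarrow> nat" where
  "dem s1 t1 s2 t2 k1 k2 S =
     (if separates S s1 t1 then k1 else 0) + (if separates S s2 t2 then k2 else 0)"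

definition cap_cut ::
  "'e set \<Rightarrow> ('e \<Rightarrow> 'v \<times> 'v) \<Rightarrow> ('e \<Rightarrow> nat) \<Rightarrow> 'v \<Rightarrow> 'v \<Rightarrow> 'v \<Rightarrow> 'v
     \<Rightarrow> nat \<Rightarrow> nat \<Rightarrow> 'v set \<Rightarrow> real" where
  "cap_cut E ends u s1 t1 s2 t2 k1 k2 S =
     Sup {x::real. x \<ge> 0 \<and> (\<exists>n::'e \<Rightarrow> nat.
            (\<forall>e\<in>cut_edges E ends S. real (n e) * x \<le> real (u e)) \<and>
            (\<Sum>e\<in>cut_edges E ends S. n e) \<ge> dem s1 t1 s2 t2 k1 k2 S)}"

definition cap_graph ::
  "'v set \<Rightarrow> 'e set \<Rightarrow> ('e \<Rightarrow> 'v \<times> 'v) \<Rightarrow> ('e \<Rightarrow> nat) \<Rightarrow> 'v \<Rightarrow> 'v \<Rightarrow> 'v \<Rightarrow> 'v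
     \<Rightarrow> nat \<Rightarrow> nat \<Rightarrow> real" where
  "cap_graph V E ends u s1 t1 s2 t2 k1 k2 =
     Min ((cap_cut E ends u s1 t1 s2 t2 k1 k2) `
          {S. S \<subseteq> V \<and> dem s1 t1 s2 t2 k1 k2 S \<noteq> 0})"

end

theory Submission
  imports Defs
begin

text \<open>Any totally uniform k1,k2-flow with per-path value f makes f admissible for every cut
  (take n(e) = number of paths through e), so f \<le> c_{k1,k2}(G) = x/2. Conversely, minimality of
  x = c_{k1/2,k2/2}(G) forces every cut S to carry dem_{k1/2,k2/2}(S) units of the floor capacities
  \<lfloor>u_e/x\<rfloor>. Hu's theorem, in the form of two integral single-commodity flows f and g existing
  by Gale's cut criterion, yields integral flows f + g and f - g of values k1 and k2 whose combined
  load is at most twice the floor capacities; decomposing them into paths and giving each path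
  flow x/2 respects u.\<close>

section \<open>Simple paths from reachability\<close>

definition step_path :: "('v \<Rightarrow> 'e \<Rightarrow> 'v \<Rightarrow> bool) \<Rightarrow> 'v \<Rightarrow> 'v \<Rightarrow> 'v list \<Rightarrow> 'e list \<Rightarrow> bool" where
  "step_path st s t vs es \<longleftrightarrow> vs \<noteq> [] \<and> hd vs = s \<and> last vs = t \<and> distinct vs \<and>
     length vs = length es + 1 \<and> (\<forall>i<length es. st (vs!i) (es!i) (vs!Suc i))"

definition reach :: "('v \<Rightarrow> 'e \<Rightarrow> 'v \<Rightarrow> bool) \<Rightarrow> 'v \<Rightarrow> 'v set" where
  "reach st s = {w. (\<lambda>a b. \<exists>e. st a e b)\<^sup>*\<^sup>* s w}"

lemma start_in_reach [simp]: "s \<in> reach st s"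
  by (simp add: reach_def)

lemma reach_step: "a \<in> reach st s \<Longrightarrow> st a e b \<Longrightarrow> b \<in> reach st s"
  unfolding reach_def by (auto intro: rtranclp.rtrancl_into_rtrancl)

lemma reach_step_path:
  assumes "t \<in> reach st s"
  shows "\<exists>vs es. step_path st s t vs es"
  using assms unfolding reach_def mem_Collect_eq
proof (induction rule: rtranclp_induct)
  case base
  show ?case by (rule exI[of _ "[s]"], rule exI[of _ "[]"]) (simp add: step_path_def)
next
  case (step a b)
  then obtain vs es where p: "step_path st s a vs es" by blast
  from step obtain e where e: "st a e b" by blast
  show ?case
  proof (cases "b \<in> set vs")
    case True
    then obtain i where i: "i < length vs" "vs!i = b" by (auto simp: in_set_conv_nth)
    have "step_path st s b (take (Suc i) vs) (take i es)"
      using p i unfolding step_path_def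
      by (auto simp: hd_conv_nth last_conv_nth min_def) (metis le_antisym less_Suc_eq_le)
    then show ?thesis by blast
  next
    case False
    have "step_path st s b (vs @ [b]) (es @ [e])"
      using p False e unfolding step_path_def
      by (auto simp: nth_append last_conv_nth) (metis less_antisym nth_append_length)
    then show ?thesis by blast
  qed
qed

definition joins :: "'e set \<Rightarrow> ('e \<Rightarrow> 'v \<times> 'v) \<Rightarrow> 'v \<Rightarrow> 'e \<Rightarrow> 'v \<Rightarrow> bool" where
  "joins E ends a e b \<longleftrightarrow> e \<in> E \<and> (ends e = (a, b) \<or> ends e = (b, a))"

lemma reach_subset:
  assumes G: "graph V E ends" and s: "s \<in> V" and st: "\<And>a e b. st a e b \<Longrightarrow> joins E ends a e b"
  shows "reach st s \<subseteq> V"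
proof
  fix w assume "w \<in> reach st s"
  then show "w \<in> V" unfolding reach_def mem_Collect_eq
  proof (induction rule: rtranclp_induct)
    case base then show ?case using s .
  next
    case (step a b)
    then obtain e where "joins E ends a e b" using st by blast
    then show ?case using G unfolding joins_def graph_def by (metis fst_conv snd_conv)
  qed
qed

lemma joining_step_path:
  assumes p: "step_path st s t vs es" and st: "\<And>a e b. st a e b \<Longrightarrow> joins E ends a e b"
  shows "length vs = length es + 1" "vs!0 = s" "vs!length es = t"
    and "\<forall>i<length es. joins E ends (vs!i) (es!i) (vs!Suc i)"
    and "distinct es"
proof -
  show len: "length vs = length es + 1" and "vs!0 = s" "vs!length es = t"
    using p by (auto simp: step_path_def hd_conv_nth last_conv_nth)
  show steps: "\<forall>i<length es. joins E ends (vs!i) (es!i) (vs!Suc i)"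
    using p st by (auto simp: step_path_def)
  have dvs: "distinct vs" using p by (simp add: step_path_def)
  have "i = j" if "i < length es" "j < length es" "es!i = es!j" "i < j" for i j
  proof -
    have "joins E ends (vs!i) (es!i) (vs!Suc i)" "joins E ends (vs!j) (es!j) (vs!Suc j)"
      using steps that by (metis less_trans)+
    then have "vs!i = vs!j \<or> vs!i = vs!Suc j" using that unfolding joins_def by auto
    moreover have "vs!i \<noteq> vs!j" "vs!i \<noteq> vs!Suc j"
      using dvs len that by (auto simp: nth_eq_iff_index_eq)
    ultimately show ?thesis by blast
  qed
  then show "distinct es" unfolding distinct_conv_nth by (metis linorder_neqE_nat)
qed

lemma step_path_is_path:
  assumes G: "graph V E ends" and s: "s \<in> V"
    and st: "\<And>a e b. st a e b \<Longrightarrow> joins E ends a e b"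
    and p: "step_path st s t vs es"
  shows "is_path V E ends s t (vs, es)"
proof -
  have "set vs \<subseteq> reach st s"
  proof
    fix v assume "v \<in> set vs"
    then obtain i where i: "i < length vs" "v = vs!i" by (auto simp: in_set_conv_nth)
    have "vs!i \<in> reach st s" if "i < length vs" for i
      using that
    proof (induction i)
      case 0 then show ?case using p by (simp add: step_path_def hd_conv_nth)
    next
      case (Suc i)
      then show ?case using p by (auto simp: step_path_def intro: reach_step)
    qed
    then show "v \<in> reach st s" using i by simp
  qed
  then have "set vs \<subseteq> V" using reach_subset[OF G s st] by blast
  then show ?thesis using p st unfolding is_path_def step_path_def joins_def Let_def by auto
qed

section \<open>Net outflow and path flows\<close>

text \<open>An integral flow assigns each edge a signed amount; positive means from fst (ends e) to
  snd (ends e).\<close>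

definition net_out :: "'e set \<Rightarrow> ('e \<Rightarrow> 'v \<times> 'v) \<Rightarrow> ('e \<Rightarrow> int) \<Rightarrow> 'v \<Rightarrow> int" where
  "net_out E ends f v = (\<Sum>e\<in>E. f e * (of_bool (fst (ends e) = v) - of_bool (snd (ends e) = v)))"

lemma net_out_add: "net_out E ends (\<lambda>e. f e + g e) v = net_out E ends f v + net_out E ends g v"
  unfolding net_out_def distrib_right sum.distrib ..

lemma net_out_diff: "net_out E ends (\<lambda>e. f e - g e) v = net_out E ends f v - net_out E ends g v"
  unfolding net_out_def left_diff_distrib sum_subtractf ..

lemma net_out_uminus: "net_out E ends (\<lambda>e. - f e) v = - net_out E ends f v"
  unfolding net_out_def by (simp add: sum_negf)

lemma sum_of_bool_eq: "finite R \<Longrightarrow> (\<Sum>v\<in>R. of_bool (a = v) :: int) = of_bool (a \<in> R)"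
  unfolding of_bool_def by (simp add: sum.delta)

lemma sum_net_out:
  assumes "finite E" "finite R"
  shows "(\<Sum>v\<in>R. net_out E ends f v) =
     (\<Sum>e\<in>E. f e * (of_bool (fst (ends e) \<in> R) - of_bool (snd (ends e) \<in> R)))"
proof -
  have "(\<Sum>v\<in>R. net_out E ends f v) =
      (\<Sum>e\<in>E. \<Sum>v\<in>R. f e * (of_bool (fst (ends e) = v) - of_bool (snd (ends e) = v)))"
    unfolding net_out_def by (rule sum.swap)
  also have "\<dots> = (\<Sum>e\<in>E. f e * (of_bool (fst (ends e) \<in> R) - of_bool (snd (ends e) \<in> R)))"
    using assms by (intro sum.cong refl)
      (simp only: sum_distrib_left[symmetric] sum_subtractf sum_of_bool_eq)
  finally show ?thesis .
qed

lemma sum_net_out_V: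
  assumes G: "graph V E ends"
  shows "(\<Sum>v\<in>V. net_out E ends f v) = 0"
  using G sum_net_out[of E V ends f] by (simp add: graph_def)

definition dipole :: "'v \<Rightarrow> 'v \<Rightarrow> int \<Rightarrow> 'v \<Rightarrow> int" where
  "dipole s t d v = d * (of_bool (v = s) - of_bool (v = t))"

lemma sum_dipole:
  assumes "finite S"
  shows "(\<Sum>v\<in>S. dipole s t d v) = d * (of_bool (s \<in> S) - of_bool (t \<in> S))"
  using assms sum_of_bool_eq[of S s] sum_of_bool_eq[of S t]
  by (simp add: dipole_def sum_distrib_left[symmetric] sum_subtractf eq_commute)

lemma abs_sum_dipole:
  assumes "finite S" "0 \<le> d"
  shows "\<bar>\<Sum>v\<in>S. dipole s t d v\<bar> = (if separates S s t then d else 0)"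
  using assms by (auto simp: sum_dipole separates_def)

definition orient :: "('e \<Rightarrow> 'v \<times> 'v) \<Rightarrow> 'e \<Rightarrow> 'v \<Rightarrow> 'v \<Rightarrow> int" where
  "orient ends e a b = (if ends e = (a, b) then 1 else -1)"

definition path_flow :: "('e \<Rightarrow> 'v \<times> 'v) \<Rightarrow> 'v list \<Rightarrow> 'e list \<Rightarrow> 'e \<Rightarrow> int" where
  "path_flow ends vs es e = (\<Sum>i<length es. if es!i = e then orient ends e (vs!i) (vs!Suc i) else 0)"

lemma orient_mult_incidence:
  assumes "joins E ends a e b"
  shows "orient ends e a b * (of_bool (fst (ends e) = v) - of_bool (snd (ends e) = v))
     = of_bool (v = a) - of_bool (v = b)"
  using assms by (cases "ends e") (auto simp: orient_def joins_def)

lemma net_out_path_flow: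
  assumes fin: "finite E" and "length vs = length es + 1"
    and steps: "\<forall>i<length es. joins E ends (vs!i) (es!i) (vs!Suc i)"
  shows "net_out E ends (path_flow ends vs es) v = dipole (vs!0) (vs!length es) 1 v"
proof -
  let ?w = "\<lambda>e. (of_bool (fst (ends e) = v) - of_bool (snd (ends e) = v)) :: int"
  have "net_out E ends (path_flow ends vs es) v =
      (\<Sum>e\<in>E. \<Sum>i<length es. if es!i = e then orient ends e (vs!i) (vs!Suc i) * ?w e else 0)"
    unfolding net_out_def path_flow_def sum_distrib_right by (intro sum.cong refl) auto
  also have "\<dots> = (\<Sum>i<length es. \<Sum>e\<in>E. if es!i = e then orient ends e (vs!i) (vs!Suc i) * ?w e else 0)"
    by (rule sum.swap)
  also have "\<dots> = (\<Sum>i<length es. orient ends (es!i) (vs!i) (vs!Suc i) * ?w (es!i))"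
  proof (intro sum.cong refl)
    fix i assume "i \<in> {..<length es}"
    then have "es!i \<in> E" using steps by (auto simp: joins_def)
    then show "(\<Sum>e\<in>E. if es!i = e then orient ends e (vs!i) (vs!Suc i) * ?w e else 0)
       = orient ends (es!i) (vs!i) (vs!Suc i) * ?w (es!i)"
      using fin by (simp only: sum.delta' if_True)
  qed
  also have "\<dots> = (\<Sum>i<length es. of_bool (v = vs!i) - of_bool (v = vs!Suc i))"
    using steps by (intro sum.cong refl orient_mult_incidence) auto
  also have "\<dots> = dipole (vs!0) (vs!length es) 1 v"
    using sum_lessThan_telescope'[of "\<lambda>i. of_bool (v = vs!i) :: int"] by (simp add: dipole_def)
  finally show ?thesis .
qed

lemma path_flow_nth:
  assumes "distinct es" "i < length es"
  shows "path_flow ends vs es (es!i) = orient ends (es!i) (vs!i) (vs!Suc i)"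
proof -
  have "path_flow ends vs es (es!i)
      = (\<Sum>j<length es. if j = i then orient ends (es!i) (vs!j) (vs!Suc j) else 0)"
    unfolding path_flow_def using assms by (intro sum.cong refl) (auto simp: nth_eq_iff_index_eq)
  then show ?thesis using assms by (simp add: sum.delta')
qed

lemma path_flow_notin: "e \<notin> set es \<Longrightarrow> path_flow ends vs es e = 0"
  unfolding path_flow_def by (intro sum.neutral) (auto simp: in_set_conv_nth)

definition residual :: "'e set \<Rightarrow> ('e \<Rightarrow> 'v \<times> 'v) \<Rightarrow> ('e \<Rightarrow> int) \<Rightarrow> ('e \<Rightarrow> int)
    \<Rightarrow> 'v \<Rightarrow> 'e \<Rightarrow> 'v \<Rightarrow> bool" where
  "residual E ends c f a e b \<longleftrightarrow> joins E ends a e b \<and> orient ends e a b * f e < c e"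

lemma residual_joins: "residual E ends c f a e b \<Longrightarrow> joins E ends a e b"
  by (simp add: residual_def)

lemma reach_residual_subset:
  assumes "graph V E ends" "s \<in> V"
  shows "reach (residual E ends c f) s \<subseteq> V"
  by (rule reach_subset[OF assms]) (simp add: residual_def)

lemma path_flow_on_residual_path:
  assumes p: "step_path (residual E ends c f) s t vs es" and e: "e \<in> set es"
  shows "(path_flow ends vs es e = 1 \<or> path_flow ends vs es e = -1)
     \<and> path_flow ends vs es e * f e < c e"
proof -
  obtain i where i: "i < length es" "e = es!i" using e by (auto simp: in_set_conv_nth)
  have "distinct es" using joining_step_path(5)[OF p residual_joins[of E ends c f]] .
  then have "path_flow ends vs es e = orient ends e (vs!i) (vs!Suc i)"
    using path_flow_nth i by metis
  moreover have "residual E ends c f (vs!i) e (vs!Suc i)"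
    using p i by (simp add: step_path_def)
  ultimately show ?thesis by (simp add: residual_def orient_def)
qed

lemma closed_set_net_out_ge:
  assumes finE: "finite E" and finR: "finite R"
    and closed: "\<And>a e b. a \<in> R \<Longrightarrow> residual E ends c f a e b \<Longrightarrow> b \<in> R"
  shows "(\<Sum>e\<in>cut_edges E ends R. c e) \<le> (\<Sum>v\<in>R. net_out E ends f v)"
proof -
  have crossing: "(if e \<in> cut_edges E ends R then c e else 0)
      \<le> f e * (of_bool (fst (ends e) \<in> R) - of_bool (snd (ends e) \<in> R))" if e: "e \<in> E" for e
  proof -
    obtain a b where ab: "ends e = (a, b)" by (cases "ends e")
    consider "a \<in> R" "b \<notin> R" | "a \<notin> R" "b \<in> R" | "(a \<in> R) = (b \<in> R)" by blast
    then show ?thesis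
    proof cases
      case 1
      then have "\<not> residual E ends c f a e b" using closed by blast
      then show ?thesis using 1 ab e by (auto simp: residual_def joins_def orient_def cut_edges_def)
    next
      case 2
      then have "\<not> residual E ends c f b e a" using closed by blast
      moreover have "a \<noteq> b" using 2 by auto
      ultimately show ?thesis using 2 ab e by (auto simp: residual_def joins_def orient_def cut_edges_def)
    next
      case 3
      then show ?thesis using ab by (auto simp: cut_edges_def)
    qed
  qed
  have "(\<Sum>e\<in>cut_edges E ends R. c e) = (\<Sum>e\<in>E. if e \<in> cut_edges E ends R then c e else 0)"
    using finE by (simp add: sum.If_cases cut_edges_def Int_def conj_commute)
  also have "\<dots> \<le> (\<Sum>e\<in>E. f e * (of_bool (fst (ends e) \<in> R) - of_bool (snd (ends e) \<in> R)))"
    by (rule sum_mono) (rule crossing)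
  also have "\<dots> = (\<Sum>v\<in>R. net_out E ends f v)"
    by (rule sum_net_out[symmetric, OF finE finR])
  finally show ?thesis .
qed

section \<open>Feasible flows and path decomposition\<close>

lemma exists_less_of_sum_eq:
  fixes x y :: "'a \<Rightarrow> int"
  assumes "finite A" "(\<Sum>a\<in>A. x a) = (\<Sum>a\<in>A. y a)" "\<exists>a\<in>A. x a \<noteq> y a"
  shows "\<exists>a\<in>A. x a < y a"
proof (rule ccontr)
  assume "\<not> ?thesis"
  then have "(\<Sum>a\<in>A. y a) < (\<Sum>a\<in>A. x a)"
    using assms by (intro sum_strict_mono_ex1) (auto simp: not_less order.order_iff_strict)
  then show False using assms(2) by simp
qed

lemma sum_abs_sub_dipole_less:
  fixes D :: "'v \<Rightarrow> int"
  assumes "finite V" "s \<in> V" "t \<in> V" "0 < D s" "D t < 0"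
  shows "(\<Sum>v\<in>V. \<bar>D v - dipole s t 1 v\<bar>) < (\<Sum>v\<in>V. \<bar>D v\<bar>)"
  using assms by (intro sum_strict_mono_ex1) (auto simp: dipole_def)

lemma net_out_residual_path:
  assumes "finite E" "step_path (residual E ends c f) s t vs es"
  shows "net_out E ends (path_flow ends vs es) v = dipole s t 1 v"
  using net_out_path_flow[OF assms(1) joining_step_path(1,4)[OF assms(2) residual_joins[of E ends c f]]]
    joining_step_path(2,3)[OF assms(2) residual_joins[of E ends c f]] by simp

lemma abs_add_path_flow_le:
  assumes "step_path (residual E ends c f) s t vs es" "\<bar>f e\<bar> \<le> c e"
  shows "\<bar>f e + path_flow ends vs es e\<bar> \<le> c e"
  using assms(2) path_flow_on_residual_path[OF assms(1), of e] path_flow_notin[of e es ends vs]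
  by (cases "e \<in> set es") auto

lemma abs_sub_path_flow:
  assumes "step_path (residual E ends (\<lambda>_. 0) (\<lambda>e. - f e)) s t vs es"
  shows "\<bar>f e - path_flow ends vs es e\<bar> + of_bool (e \<in> set es) = \<bar>f e\<bar>"
  using path_flow_on_residual_path[OF assms, of e] path_flow_notin[of e es ends vs]
  by (cases "e \<in> set es") auto

lemma augmenting_path_reduces_deviation:
  assumes finE: "finite E" and finV: "finite V"
    and p: "step_path (residual E ends c f) s t vs es" and "s \<in> V" "t \<in> V"
    and "net_out E ends f s < b s" "b t < net_out E ends f t"
  shows "(\<Sum>v\<in>V. \<bar>b v - net_out E ends (\<lambda>e. f e + path_flow ends vs es e) v\<bar>)
    < (\<Sum>v\<in>V. \<bar>b v - net_out E ends f v\<bar>)"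
proof -
  have shift: "b v - net_out E ends (\<lambda>e. f e + path_flow ends vs es e) v
      = (b v - net_out E ends f v) - dipole s t 1 v" for v
    using net_out_residual_path[OF finE p] by (simp add: net_out_add)
  show ?thesis unfolding shift
    using sum_abs_sub_dipole_less[OF finV, of s t "\<lambda>v. b v - net_out E ends f v"] assms(4-) by simp
qed

text \<open>Gale's feasibility theorem, proved by augmenting along residual paths: a feasible flow
  of least total deviation from the supplies b either admits a residual path from a vertex of
  deficit to a vertex of surplus, or the residually reachable set violates the cut condition.\<close>

lemma feasible_flow_exists:
  fixes c :: "'e \<Rightarrow> nat" and b :: "'v \<Rightarrow> int"
  assumes G: "graph V E ends"
    and balanced: "(\<Sum>v\<in>V. b v) = 0"
    and cut_cond: "\<And>S. S \<subseteq> V \<Longrightarrow> (\<Sum>v\<in>S. b v) \<le> (\<Sum>e\<in>cut_edges E ends S. int (c e))"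
  shows "\<exists>f. (\<forall>e\<in>E. \<bar>f e\<bar> \<le> int (c e)) \<and> (\<forall>v\<in>V. net_out E ends f v = b v)"
proof -
  define feasible where "feasible f \<longleftrightarrow> (\<forall>e\<in>E. \<bar>f e\<bar> \<le> int (c e))" for f :: "'e \<Rightarrow> int"
  define deviation where "deviation f = nat (\<Sum>v\<in>V. \<bar>b v - net_out E ends f v\<bar>)" for f
  obtain f where feas: "feasible f" and least: "\<And>g. feasible g \<Longrightarrow> deviation f \<le> deviation g"
    using ex_has_least_nat[of feasible "\<lambda>_. 0" deviation] by (auto simp: feasible_def)
  have finV: "finite V" and finE: "finite E" using G by (auto simp: graph_def)
  show ?thesis
  proof (rule ccontr)
    assume "\<not> ?thesis"
    then have "\<exists>v\<in>V. net_out E ends f v \<noteq> b v" using feas feasible_def by blast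
    then obtain v0 where v0: "v0 \<in> V" "net_out E ends f v0 < b v0"
      using exists_less_of_sum_eq[OF finV] sum_net_out_V[OF G] balanced by metis
    define R where "R = reach (residual E ends (\<lambda>e. int (c e)) f) v0"
    have RV: "R \<subseteq> V" unfolding R_def using reach_residual_subset[OF G v0(1)] .
    show False
    proof (cases "\<exists>w\<in>R. b w < net_out E ends f w")
      case True
      then obtain w vs es where w: "w \<in> R" "b w < net_out E ends f w"
        and p: "step_path (residual E ends (\<lambda>e. int (c e)) f) v0 w vs es"
        using reach_step_path unfolding R_def by metis
      define g where "g = (\<lambda>e. f e + path_flow ends vs es e)"
      have "feasible g"
        using feas abs_add_path_flow_le[OF p] unfolding feasible_def g_def by blast
      have "(\<Sum>v\<in>V. \<bar>b v - net_out E ends g v\<bar>) < (\<Sum>v\<in>V. \<bar>b v - net_out E ends f v\<bar>)"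
        unfolding g_def using augmenting_path_reduces_deviation[OF finE finV p] v0 w RV by blast
      moreover have "0 \<le> (\<Sum>v\<in>V. \<bar>b v - net_out E ends g v\<bar>)" by (simp add: sum_nonneg)
      ultimately have "deviation g < deviation f" unfolding deviation_def zless_nat_conj by linarith
      then show False using least[OF \<open>feasible g\<close>] by simp
    next
      case False
      have "v0 \<in> R" by (simp add: R_def)
      then have "(\<Sum>v\<in>R. net_out E ends f v) < (\<Sum>v\<in>R. b v)"
        using False v0(2) finite_subset[OF RV finV] by (intro sum_strict_mono_ex1) (auto simp: not_less)
      also have "\<dots> \<le> (\<Sum>e\<in>cut_edges E ends R. int (c e))" using cut_cond[OF RV] .
      also have "\<dots> \<le> (\<Sum>v\<in>R. net_out E ends f v)"
        using closed_set_net_out_ge[OF finE finite_subset[OF RV finV]] reach_step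
        unfolding R_def by metis
      finally show False by simp
    qed
  qed
qed

text \<open>Residual steps of the negated flow with zero capacities are the steps along edges carrying
  positive flow. If their reachable set R missed t, the positive supply of s would have to leave R
  against the flow.\<close>

lemma target_reachable_along_flow:
  assumes G: "graph V E ends" and s: "s \<in> V" and d: "0 < d"
    and flow: "\<forall>v\<in>V. net_out E ends f v = dipole s t d v"
  shows "t \<in> reach (residual E ends (\<lambda>_. 0) (\<lambda>e. - f e)) s"
proof (rule ccontr)
  define R where "R = reach (residual E ends (\<lambda>_. 0) (\<lambda>e. - f e)) s"
  have finE: "finite E" using G by (simp add: graph_def)
  have RV: "R \<subseteq> V" unfolding R_def by (rule reach_residual_subset[OF G s])
  then have finR: "finite R" using G finite_subset by (auto simp: graph_def)
  assume "t \<notin> R"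
  then have "(\<Sum>v\<in>R. net_out E ends f v) = d"
    using flow RV finR by (simp add: sum_dipole subset_iff R_def)
  moreover have "0 \<le> (\<Sum>v\<in>R. net_out E ends (\<lambda>e. - f e) v)"
    using closed_set_net_out_ge[OF finE finR, of ends "\<lambda>_. 0"] reach_step
    unfolding R_def by fastforce
  ultimately show False using d by (simp add: net_out_uminus sum_negf)
qed

lemma load_Cons: "load (p # P) e = (if e \<in> set (snd p) then Suc (load P e) else load P e)"
  by (simp add: load_def)

lemma load_append: "load (P @ Q) e = load P e + load Q e"
  by (simp add: load_def)

lemma flow_decomposition:
  assumes G: "graph V E ends" and s: "s \<in> V"
    and "\<forall>v\<in>V. net_out E ends f v = dipole s t (int d) v"
  shows "\<exists>P. length P = d \<and> (\<forall>p\<in>set P. is_path V E ends s t p) \<and> (\<forall>e\<in>E. int (load P e) \<le> \<bar>f e\<bar>)"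
  using assms(3)
proof (induction d arbitrary: f)
  case 0
  show ?case by (rule exI[of _ "[]"]) (simp add: load_def)
next
  case (Suc d)
  have finE: "finite E" using G by (simp add: graph_def)
  obtain vs es where p: "step_path (residual E ends (\<lambda>_. 0) (\<lambda>e. - f e)) s t vs es"
    using reach_step_path target_reachable_along_flow[OF G s _ Suc.prems] by fastforce
  define g where "g = (\<lambda>e. f e - path_flow ends vs es e)"
  have "net_out E ends g v = dipole s t (int d) v" if "v \<in> V" for v
  proof -
    have "net_out E ends g v = dipole s t (int (Suc d)) v - dipole s t 1 v"
      using Suc.prems that net_out_residual_path[OF finE p, of v] by (simp add: g_def net_out_diff)
    then show ?thesis by (simp add: dipole_def algebra_simps)
  qed
  from Suc.IH[OF ballI[OF this]] obtain P where P: "length P = d" "\<forall>p\<in>set P. is_path V E ends s t p"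
    "\<forall>e\<in>E. int (load P e) \<le> \<bar>g e\<bar>" by blast
  have "int (load ((vs, es) # P) e) \<le> \<bar>f e\<bar>" if "e \<in> E" for e
    using P(3) that abs_sub_path_flow[OF p, of e] unfolding g_def load_Cons by auto
  moreover have "is_path V E ends s t (vs, es)"
    by (rule step_path_is_path[OF G s _ p]) (simp add: residual_def)
  ultimately show ?case using P by (intro exI[of _ "(vs, es) # P"]) auto
qed

section \<open>Cuts and cut capacities\<close>

lemma path_crosses_cut:
  assumes p: "is_path V E ends s t (vs, es)" and sep: "separates S s t"
  shows "\<exists>i<length es. es!i \<in> cut_edges E ends S"
proof (rule ccontr)
  assume no_cross: "\<not> ?thesis"
  have h: "vs!0 = s" "vs!length es = t"
    and steps: "\<forall>i<length es. es!i \<in> E \<and>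
      (ends (es!i) = (vs!i, vs!Suc i) \<or> ends (es!i) = (vs!Suc i, vs!i))"
    using p by (auto simp: is_path_def Let_def hd_conv_nth last_conv_nth)
  have "(vs!i \<in> S) = (s \<in> S)" if "i \<le> length es" for i
    using that
  proof (induction i)
    case 0 then show ?case using h by simp
  next
    case (Suc i)
    then have "es!i \<notin> cut_edges E ends S" "es!i \<in> E"
      "ends (es!i) = (vs!i, vs!Suc i) \<or> ends (es!i) = (vs!Suc i, vs!i)"
      using no_cross steps by auto
    then have "(vs!i \<in> S) = (vs!Suc i \<in> S)" unfolding cut_edges_def by auto
    then show ?case using Suc by simp
  qed
  from this[of "length es"] show False using h sep by (simp add: separates_def)
qed

lemma length_le_cut_load:
  assumes finE: "finite E" and sep: "separates S s t" and P: "\<forall>p\<in>set P. is_path V E ends s t p"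
  shows "length P \<le> (\<Sum>e\<in>cut_edges E ends S. load P e)"
  using P
proof (induction P)
  case Nil then show ?case by simp
next
  case (Cons p P)
  obtain vs es where p: "p = (vs, es)" by (cases p)
  obtain i where i: "i < length es" "es!i \<in> cut_edges E ends S"
    using path_crosses_cut[OF _ sep] Cons.prems p by fastforce
  have finC: "finite (cut_edges E ends S)" using finE by (simp add: cut_edges_def)
  have "(1::nat) \<le> (\<Sum>e\<in>cut_edges E ends S. if e \<in> set es then 1 else 0)"
    using member_le_sum[OF _ _ finC, of "es!i" "\<lambda>e. if e \<in> set es then 1 else 0::nat"] i by simp
  moreover have "(\<Sum>e\<in>cut_edges E ends S. load (p # P) e) =
      (\<Sum>e\<in>cut_edges E ends S. if e \<in> set es then 1 else 0) + (\<Sum>e\<in>cut_edges E ends S. load P e)"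
    unfolding sum.distrib[symmetric] load_Cons p by (intro sum.cong refl) auto
  ultimately show ?case using Cons by simp
qed

lemma dem_le_cut_load:
  assumes "finite E" "path_families V E ends s1 t1 s2 t2 k1 k2 P1 P2"
  shows "dem s1 t1 s2 t2 k1 k2 S \<le> (\<Sum>e\<in>cut_edges E ends S. load (P1 @ P2) e)"
proof -
  have "(if separates S s1 t1 then k1 else 0) \<le> (\<Sum>e\<in>cut_edges E ends S. load P1 e)"
    "(if separates S s2 t2 then k2 else 0) \<le> (\<Sum>e\<in>cut_edges E ends S. load P2 e)"
    using length_le_cut_load[OF assms(1)] assms(2) by (auto simp: path_families_def)
  then show ?thesis unfolding dem_def load_append sum.distrib by simp
qed

lemma cut_edges_nonempty:
  assumes conn1: "\<exists>p. is_path V E ends s1 t1 p" and conn2: "\<exists>p. is_path V E ends s2 t2 p"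
    and "dem s1 t1 s2 t2 k1 k2 S \<noteq> 0"
  shows "cut_edges E ends S \<noteq> {}"
proof -
  have "separates S s1 t1 \<or> separates S s2 t2" using assms(3) by (auto simp: dem_def split: if_splits)
  then show ?thesis
    using conn1 conn2 path_crosses_cut[of V E ends _ _ _ _ S] by fastforce
qed

definition admissible :: "'e set \<Rightarrow> ('e \<Rightarrow> nat) \<Rightarrow> nat \<Rightarrow> real set" where
  "admissible C u D = {x::real. x \<ge> 0 \<and> (\<exists>n::'e \<Rightarrow> nat.
     (\<forall>e\<in>C. real (n e) * x \<le> real (u e)) \<and> (\<Sum>e\<in>C. n e) \<ge> D)}"

lemma cap_cut_eq_Sup_admissible:
  "cap_cut E ends u s1 t1 s2 t2 k1 k2 S = Sup (admissible (cut_edges E ends S) u (dem s1 t1 s2 t2 k1 k2 S))"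
  unfolding cap_cut_def admissible_def ..

lemma zero_in_admissible:
  assumes "finite C" "C \<noteq> {}"
  shows "0 \<in> admissible C u D"
proof -
  obtain e where "e \<in> C" using assms(2) by blast
  then have "D \<le> (\<Sum>e\<in>C. D)" using assms(1) member_le_sum[of e C "\<lambda>_. D"] by simp
  then show ?thesis unfolding admissible_def by (auto intro!: exI[of _ "\<lambda>_. D"])
qed

lemma bdd_above_admissible:
  assumes "finite C" "0 < D"
  shows "bdd_above (admissible C u D)"
proof (rule bdd_aboveI)
  fix y assume "y \<in> admissible C u D"
  then obtain n where y: "0 \<le> y" "\<forall>e\<in>C. real (n e) * y \<le> real (u e)" "D \<le> (\<Sum>e\<in>C. n e)"
    unfolding admissible_def by blast
  have "(\<Sum>e\<in>C. n e) \<noteq> 0" using y(3) assms(2) by linarith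
  then obtain e where e: "e \<in> C" "1 \<le> n e" using assms(1) by (auto simp: sum_eq_0_iff Suc_le_eq)
  have "y \<le> real (n e) * y" using e(2) y(1) by (simp add: mult_le_cancel_right1)
  also have "\<dots> \<le> real (u e)" using y(2) e(1) by blast
  also have "\<dots> \<le> (\<Sum>e\<in>C. real (u e))" using member_le_sum[OF e(1) _ assms(1), of "\<lambda>e. real (u e)"] by simp
  finally show "y \<le> (\<Sum>e\<in>C. real (u e))" .
qed

text \<open>An admissible y with \<Sum> n(e) > \<Sum> \<lfloor>u_e/x\<rfloor> has n(e) > \<lfloor>u_e/x\<rfloor> on some edge,
  which forces y \<le> u_e / (\<lfloor>u_e/x\<rfloor> + 1) < x.\<close>

lemma dem_le_sum_floor:
  assumes finC: "finite C" and Cne: "C \<noteq> {}" and x: "0 < x" "x \<le> Sup (admissible C u D)"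
  shows "D \<le> (\<Sum>e\<in>C. nat \<lfloor>real (u e) / x\<rfloor>)"
proof (rule ccontr)
  assume short: "\<not> ?thesis"
  define m where "m e = nat \<lfloor>real (u e) / x\<rfloor>" for e
  define M where "M = Max ((\<lambda>e. real (u e) / (real (m e) + 1)) ` C)"
  have "real (u e) / (real (m e) + 1) < x" for e
  proof -
    have "real (u e) / x < real (m e) + 1" using x(1) unfolding m_def by linarith
    then show ?thesis using x(1) by (simp add: field_simps add_pos_nonneg)
  qed
  then have "M < x" unfolding M_def using finC Cne by simp
  moreover have "Sup (admissible C u D) \<le> M"
  proof (rule cSup_least)
    show "admissible C u D \<noteq> {}" using zero_in_admissible[OF finC Cne] by blast
    fix y assume "y \<in> admissible C u D"
    then obtain n where y: "0 \<le> y" "\<forall>e\<in>C. real (n e) * y \<le> real (u e)" "D \<le> (\<Sum>e\<in>C. n e)"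
      unfolding admissible_def by blast
    have "\<not> (\<forall>e\<in>C. n e \<le> m e)"
      using sum_mono[of C n m] short y(3) unfolding m_def by fastforce
    then obtain e where e: "e \<in> C" "m e < n e" by (auto simp: not_le)
    then have "(real (m e) + 1) * y \<le> real (n e) * y" using y(1) by (intro mult_right_mono) auto
    also have "\<dots> \<le> real (u e)" using y(2) e(1) by blast
    finally have "y \<le> real (u e) / (real (m e) + 1)"
      by (simp add: pos_le_divide_eq add_pos_nonneg mult.commute)
    also have "\<dots> \<le> M" unfolding M_def using finC e(1) by simp
    finally show "y \<le> M" .
  qed
  ultimately show False using x(2) by simp
qed

lemma finite_demand_cuts:
  assumes "graph V E ends"
  shows "finite {S. S \<subseteq> V \<and> dem s1 t1 s2 t2 k1 k2 S \<noteq> 0}"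
  using assms by (auto simp: graph_def intro: finite_subset[of _ "Pow V"])

lemma cap_graph_attained:
  assumes G: "graph V E ends" and "s1 \<in> V" "s1 \<noteq> t1" "0 < k1"
  obtains S where "S \<subseteq> V" "dem s1 t1 s2 t2 k1 k2 S \<noteq> 0"
    "cap_graph V E ends u s1 t1 s2 t2 k1 k2 = cap_cut E ends u s1 t1 s2 t2 k1 k2 S"
proof -
  have "{s1} \<in> {S. S \<subseteq> V \<and> dem s1 t1 s2 t2 k1 k2 S \<noteq> 0}"
    using assms by (auto simp: dem_def separates_def)
  then have "cap_graph V E ends u s1 t1 s2 t2 k1 k2
      \<in> cap_cut E ends u s1 t1 s2 t2 k1 k2 ` {S. S \<subseteq> V \<and> dem s1 t1 s2 t2 k1 k2 S \<noteq> 0}"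
    unfolding cap_graph_def using finite_demand_cuts[OF G] by (intro Min_in) auto
  then show ?thesis using that by auto
qed

lemma cap_graph_le_cap_cut:
  assumes "graph V E ends" "S \<subseteq> V" "dem s1 t1 s2 t2 k1 k2 S \<noteq> 0"
  shows "cap_graph V E ends u s1 t1 s2 t2 k1 k2 \<le> cap_cut E ends u s1 t1 s2 t2 k1 k2 S"
  unfolding cap_graph_def using assms finite_demand_cuts[OF assms(1)] by (intro Min_le) auto

lemma cap_graph_nonneg:
  assumes G: "graph V E ends" and "s1 \<in> V" "s1 \<noteq> t1" "0 < k1"
    and conn1: "\<exists>p. is_path V E ends s1 t1 p" and conn2: "\<exists>p. is_path V E ends s2 t2 p"
  shows "0 \<le> cap_graph V E ends u s1 t1 s2 t2 k1 k2"
proof -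
  obtain S where S: "dem s1 t1 s2 t2 k1 k2 S \<noteq> 0"
    "cap_graph V E ends u s1 t1 s2 t2 k1 k2 = cap_cut E ends u s1 t1 s2 t2 k1 k2 S"
    using cap_graph_attained[OF assms(1-4)] by metis
  have "finite (cut_edges E ends S)" using G by (simp add: graph_def cut_edges_def)
  then show ?thesis unfolding S(2) cap_cut_eq_Sup_admissible
    using cut_edges_nonempty[OF conn1 conn2 S(1)] S(1)
    by (intro cSup_upper zero_in_admissible bdd_above_admissible) auto
qed

section \<open>Hu's two-commodity flow theorem\<close>

lemma dipole_pair_flow:
  fixes c :: "'e \<Rightarrow> nat"
  assumes G: "graph V E ends"
    and terminals: "s1 \<in> V" "t1 \<in> V" "s2 \<in> V" "t2 \<in> V" and pq: "{p, q} = {s2, t2}"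
    and cut_cond: "\<And>S. S \<subseteq> V \<Longrightarrow> dem s1 t1 s2 t2 d1 d2 S \<le> (\<Sum>e\<in>cut_edges E ends S. c e)"
  shows "\<exists>f. (\<forall>e\<in>E. \<bar>f e\<bar> \<le> int (c e)) \<and>
      (\<forall>v\<in>V. net_out E ends f v = dipole s1 t1 (int d1) v + dipole p q (int d2) v)"
proof (rule feasible_flow_exists[OF G])
  have finV: "finite V" using G by (simp add: graph_def)
  then show "(\<Sum>v\<in>V. dipole s1 t1 (int d1) v + dipole p q (int d2) v) = 0"
    using terminals pq by (auto simp: sum.distrib sum_dipole doubleton_eq_iff)
  fix S assume S: "S \<subseteq> V"
  have finS: "finite S" using finite_subset[OF S finV] .
  have "(\<Sum>v\<in>S. dipole s1 t1 (int d1) v + dipole p q (int d2) v)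
      \<le> \<bar>\<Sum>v\<in>S. dipole s1 t1 (int d1) v\<bar> + \<bar>\<Sum>v\<in>S. dipole p q (int d2) v\<bar>"
    unfolding sum.distrib by linarith
  also have "\<dots> = int (dem s1 t1 s2 t2 d1 d2 S)"
    using pq finS by (auto simp: abs_sum_dipole dem_def separates_def doubleton_eq_iff)
  also have "\<dots> \<le> (\<Sum>e\<in>cut_edges E ends S. int (c e))"
    using cut_cond[OF S] by (simp flip: of_nat_sum)
  finally show "(\<Sum>v\<in>S. dipole s1 t1 (int d1) v + dipole p q (int d2) v)
      \<le> (\<Sum>e\<in>cut_edges E ends S. int (c e))" .
qed

text \<open>Hu's trick: feasible flows f for the supplies d1(s1 - t1) + d2(s2 - t2) and g for
  d1(s1 - t1) + d2(t2 - s2) combine into f + g, routing 2 d1 from s1 to t1, and f - g, routing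
  2 d2 from s2 to t2, with total load at most |f + g| + |f - g| \<le> 2c.\<close>

lemma two_commodity_paths:
  fixes c :: "'e \<Rightarrow> nat"
  assumes G: "graph V E ends"
    and terminals: "s1 \<in> V" "t1 \<in> V" "s2 \<in> V" "t2 \<in> V"
    and cut_cond: "\<And>S. S \<subseteq> V \<Longrightarrow> dem s1 t1 s2 t2 d1 d2 S \<le> (\<Sum>e\<in>cut_edges E ends S. c e)"
  shows "\<exists>P1 P2. path_families V E ends s1 t1 s2 t2 (2 * d1) (2 * d2) P1 P2 \<and>
           (\<forall>e\<in>E. load (P1 @ P2) e \<le> 2 * c e)"
proof -
  obtain f where f: "\<forall>e\<in>E. \<bar>f e\<bar> \<le> int (c e)"
    "\<forall>v\<in>V. net_out E ends f v = dipole s1 t1 (int d1) v + dipole s2 t2 (int d2) v"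
    using dipole_pair_flow[OF G terminals, of s2 t2] cut_cond by blast
  obtain g where g: "\<forall>e\<in>E. \<bar>g e\<bar> \<le> int (c e)"
    "\<forall>v\<in>V. net_out E ends g v = dipole s1 t1 (int d1) v + dipole t2 s2 (int d2) v"
    using dipole_pair_flow[OF G terminals, of t2 s2] cut_cond by blast
  have "net_out E ends (\<lambda>e. f e + g e) v = dipole s1 t1 (int (2 * d1)) v" if "v \<in> V" for v
    using f(2)[rule_format, OF that] g(2)[rule_format, OF that]
    unfolding net_out_add dipole_def by (simp add: algebra_simps)
  then obtain P1 where P1: "length P1 = 2 * d1" "\<forall>p\<in>set P1. is_path V E ends s1 t1 p"
    "\<forall>e\<in>E. int (load P1 e) \<le> \<bar>f e + g e\<bar>"
    using flow_decomposition[OF G terminals(1)] by blast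
  have "net_out E ends (\<lambda>e. f e - g e) v = dipole s2 t2 (int (2 * d2)) v" if "v \<in> V" for v
    using f(2)[rule_format, OF that] g(2)[rule_format, OF that]
    unfolding net_out_diff dipole_def by (simp add: algebra_simps)
  then obtain P2 where P2: "length P2 = 2 * d2" "\<forall>p\<in>set P2. is_path V E ends s2 t2 p"
    "\<forall>e\<in>E. int (load P2 e) \<le> \<bar>f e - g e\<bar>"
    using flow_decomposition[OF G terminals(3)] by blast
  have "load (P1 @ P2) e \<le> 2 * c e" if e: "e \<in> E" for e
  proof -
    have "int (load (P1 @ P2) e) \<le> \<bar>f e + g e\<bar> + \<bar>f e - g e\<bar>"
      using P1(3) P2(3) e unfolding load_append by force
    also have "\<dots> \<le> 2 * int (c e)" using f(1) g(1) e by (auto simp: abs_if)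
    finally show ?thesis by linarith
  qed
  then show ?thesis using P1 P2 by (auto simp: path_families_def)
qed

section \<open>Totally uniform flows\<close>

lemma tu_value_le_cap_graph:
  assumes G: "graph V E ends" and "s1 \<in> V" "s1 \<noteq> t1" "0 < k1"
    and "f \<in> tu_values V E ends u s1 t1 s2 t2 k1 k2"
  shows "f \<le> cap_graph V E ends u s1 t1 s2 t2 k1 k2"
proof -
  have finE: "finite E" using G by (simp add: graph_def)
  obtain P1 P2 where f: "0 \<le> f" "path_families V E ends s1 t1 s2 t2 k1 k2 P1 P2"
    "\<forall>e\<in>E. f * real (load (P1 @ P2) e) \<le> real (u e)"
    using assms(5) unfolding tu_values_def by blast
  obtain S where S: "dem s1 t1 s2 t2 k1 k2 S \<noteq> 0"
    "cap_graph V E ends u s1 t1 s2 t2 k1 k2 = cap_cut E ends u s1 t1 s2 t2 k1 k2 S"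
    using cap_graph_attained[OF assms(1-4)] by metis
  have "f \<in> admissible (cut_edges E ends S) u (dem s1 t1 s2 t2 k1 k2 S)"
    unfolding admissible_def using f(1,3) dem_le_cut_load[OF finE f(2)]
    by (auto simp: cut_edges_def mult.commute intro!: exI[of _ "load (P1 @ P2)"])
  then show ?thesis unfolding S(2) cap_cut_eq_Sup_admissible using finE S(1)
    by (intro cSup_upper bdd_above_admissible) (auto simp: cut_edges_def)
qed

lemma zero_in_tu_values:
  assumes "\<exists>p. is_path V E ends s1 t1 p" "\<exists>p. is_path V E ends s2 t2 p"
  shows "0 \<in> tu_values V E ends u s1 t1 s2 t2 k1 k2"
proof -
  obtain p1 p2 where "is_path V E ends s1 t1 p1" "is_path V E ends s2 t2 p2" using assms by blast
  then have "path_families V E ends s1 t1 s2 t2 k1 k2 (replicate k1 p1) (replicate k2 p2)"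
    by (simp add: path_families_def)
  then show ?thesis unfolding tu_values_def by auto
qed

lemma scaled_load_le_capacity:
  fixes a x r :: real
  assumes "0 < x" "r \<le> 2 * of_int \<lfloor>a / x\<rfloor>"
  shows "x / 2 * r \<le> a"
proof -
  have "x / 2 * r \<le> x * of_int \<lfloor>a / x\<rfloor>" using assms by (simp add: mult_left_mono)
  also have "\<dots> \<le> x * (a / x)" using assms(1) by (intro mult_left_mono) auto
  finally show ?thesis using assms(1) by simp
qed

lemma floor_capacity_paths:
  assumes G: "graph V E ends"
    and terminals: "s1 \<in> V" "t1 \<in> V" "s2 \<in> V" "t2 \<in> V"
    and conn1: "\<exists>p. is_path V E ends s1 t1 p" and conn2: "\<exists>p. is_path V E ends s2 t2 p"
    and k: "even k1" "even k2"
    and x: "0 < x" "x \<le> cap_graph V E ends u s1 t1 s2 t2 (k1 div 2) (k2 div 2)"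
  shows "\<exists>P1 P2. path_families V E ends s1 t1 s2 t2 k1 k2 P1 P2 \<and>
           (\<forall>e\<in>E. real (load (P1 @ P2) e) \<le> 2 * of_int \<lfloor>real (u e) / x\<rfloor>)"
proof -
  have "dem s1 t1 s2 t2 (k1 div 2) (k2 div 2) S \<le> (\<Sum>e\<in>cut_edges E ends S. nat \<lfloor>real (u e) / x\<rfloor>)"
    if S: "S \<subseteq> V" for S
  proof (cases "dem s1 t1 s2 t2 (k1 div 2) (k2 div 2) S = 0")
    case False
    have "finite (cut_edges E ends S)" using G by (simp add: graph_def cut_edges_def)
    moreover have "x \<le> cap_cut E ends u s1 t1 s2 t2 (k1 div 2) (k2 div 2) S"
      using x(2) cap_graph_le_cap_cut[OF G S False, of u] by linarith
    ultimately show ?thesis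
      using dem_le_sum_floor[OF _ cut_edges_nonempty[OF conn1 conn2 False] x(1)]
      by (simp add: cap_cut_eq_Sup_admissible)
  qed simp
  from two_commodity_paths[OF G terminals this] obtain P1 P2
    where "path_families V E ends s1 t1 s2 t2 k1 k2 P1 P2"
      and "\<forall>e\<in>E. load (P1 @ P2) e \<le> 2 * nat \<lfloor>real (u e) / x\<rfloor>"
    using k by auto
  moreover have "real (2 * nat \<lfloor>real (u e) / x\<rfloor>) = 2 * of_int \<lfloor>real (u e) / x\<rfloor>" for e
    using x(1) by simp
  ultimately show ?thesis by (metis of_nat_le_iff)
qed

theorem mainTheorem3:
  fixes V :: "'v set" and E :: "'e set" and ends :: "'e \<Rightarrow> 'v \<times> 'v"
    and u :: "'e \<Rightarrow> nat" and s1 t1 s2 t2 :: 'v and k1 k2 :: nat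
  assumes G: "graph V E ends"
    and terminals: "s1 \<in> V" "t1 \<in> V" "s2 \<in> V" "t2 \<in> V" "s1 \<noteq> t1" "s2 \<noteq> t2"
    and conn1: "\<exists>p. is_path V E ends s1 t1 p"
    and conn2: "\<exists>p. is_path V E ends s2 t2 p"
    and k: "even k1" "even k2" "k1 > 0" "k2 > 0"
    and tight: "2 * cap_graph V E ends u s1 t1 s2 t2 k1 k2
                  = cap_graph V E ends u s1 t1 s2 t2 (k1 div 2) (k2 div 2)"
  shows "let x = cap_graph V E ends u s1 t1 s2 t2 (k1 div 2) (k2 div 2) in
           x / 2 \<in> tu_values V E ends u s1 t1 s2 t2 k1 k2 \<and>
           (\<forall>f\<in>tu_values V E ends u s1 t1 s2 t2 k1 k2. f \<le> x / 2) \<and>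
           (x > 0 \<longrightarrow>
              (\<exists>P1 P2. path_families V E ends s1 t1 s2 t2 k1 k2 P1 P2 \<and>
                 (\<forall>e\<in>E. real (load (P1 @ P2) e) \<le> 2 * of_int \<lfloor>real (u e) / x\<rfloor>)) \<and>
              (\<forall>P1 P2. path_families V E ends s1 t1 s2 t2 k1 k2 P1 P2 \<and>
                 (\<forall>e\<in>E. real (load (P1 @ P2) e) \<le> 2 * of_int \<lfloor>real (u e) / x\<rfloor>)
                 \<longrightarrow> (\<forall>e\<in>E. (x / 2) * real (load (P1 @ P2) e) \<le> real (u e))))"
proof -
  define x where "x = cap_graph V E ends u s1 t1 s2 t2 (k1 div 2) (k2 div 2)"
  have "0 \<le> x"
    unfolding x_def using k(1,3) by (intro cap_graph_nonneg[OF G terminals(1,5) _ conn1 conn2]) auto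
  have upper: "\<forall>f\<in>tu_values V E ends u s1 t1 s2 t2 k1 k2. f \<le> x / 2"
    using tu_value_le_cap_graph[OF G terminals(1,5) k(3)] tight unfolding x_def by fastforce
  have paths: "\<exists>P1 P2. path_families V E ends s1 t1 s2 t2 k1 k2 P1 P2 \<and>
      (\<forall>e\<in>E. real (load (P1 @ P2) e) \<le> 2 * of_int \<lfloor>real (u e) / x\<rfloor>)" if "0 < x"
    using floor_capacity_paths[OF G terminals(1-4) conn1 conn2 k(1,2) that] unfolding x_def by simp
  have scaled: "\<forall>e\<in>E. x / 2 * real (load (P1 @ P2) e) \<le> real (u e)"
    if "0 < x" "\<forall>e\<in>E. real (load (P1 @ P2) e) \<le> 2 * of_int \<lfloor>real (u e) / x\<rfloor>" for P1 P2
    using scaled_load_le_capacity[OF that(1)] that(2) by blast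
  have "x / 2 \<in> tu_values V E ends u s1 t1 s2 t2 k1 k2"
  proof (cases "0 < x")
    case True
    then show ?thesis using paths scaled \<open>0 \<le> x\<close> unfolding tu_values_def by fastforce
  next
    case False
    then show ?thesis using \<open>0 \<le> x\<close> zero_in_tu_values[OF conn1 conn2] by simp
  qed
  then show ?thesis unfolding Let_def x_def[symmetric] using upper paths scaled by blast
qed

end
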